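(* For each $\varepsilon>0$ there exists $y_0=y_0(\varepsilon)>2$ such that for every $y\in[2,y_0]$ and every $R>2$, the function $x\mapsto g_R(x,y)\,x^{-\varepsilon}$ is non-increasing on $(0,\infty)$.
   Context: Let $\xi$ be a nondecreasing $C^2$ function on $[0,\infty)$ with $\xi(x)=(x-1)^3\vee0$ for $x\in[0,3/2]$ and $\xi(x)=1$ for $x\ge2$. For $x\ge0$, $y\ge2$: $\zeta(x,y)=2x+(yx^{y-1}-2x)\xi(x)$. For $R>2$: $g_R(x,y)=\sqrt{(\partial_x\zeta)(x\wedge R,y)}$. *)

theory Defs
  imports "HOL-Analysis.Analysis"
begin

definition C2_on :: "real set \<Rightarrow> (real \<Rightarrow> real) \<Rightarrow> bool" where
  "C2_on S f \<longleftrightarrow> (\<exists>f' f''.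
      (\<forall>x\<in>S. (f has_real_derivative f' x) (at x within S)) \<and>
      (\<forall>x\<in>S. (f' has_real_derivative f'' x) (at x within S)) \<and>
      continuous_on S f'')"

definition admissible_xi :: "(real \<Rightarrow> real) \<Rightarrow> bool" where
  "admissible_xi \<xi> \<longleftrightarrow> mono_on {0..} \<xi> \<and> C2_on {0..} \<xi> \<and>
     (\<forall>x\<in>{0..3/2}. \<xi> x = max ((x - 1)^3) 0) \<and>
     (\<forall>x\<ge>2. \<xi> x = 1)"

definition zeta :: "(real \<Rightarrow> real) \<Rightarrow> real \<Rightarrow> real \<Rightarrow> real" where
  "zeta \<xi> x y = 2 * x + (y * x powr (y - 1) - 2 * x) * \<xi> x"

definition dzeta :: "(real \<Rightarrow> real) \<Rightarrow> real \<Rightarrow> real \<Rightarrow> real" where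
  "dzeta \<xi> x y = deriv (\<lambda>t. zeta \<xi> t y) x"

definition gR :: "(real \<Rightarrow> real) \<Rightarrow> real \<Rightarrow> real \<Rightarrow> real \<Rightarrow> real" where
  "gR \<xi> R x y = sqrt (dzeta \<xi> (min x R) y)"

end

theory Submission
  imports Defs
begin

(* Write h = \<partial>\<^sub>x\<zeta>(\<cdot>, y), so that g = sqrt h, and note that sqrt h(x) x^(-\<epsilon>) decreases wherever
   x h'(x) \<le> 2\<epsilon> h(x).  On (0,1] the cutoff vanishes and h = 2; on [2,\<infinity>) it is 1 and
   h = y(y-1)x^(y-2), for which the condition reads y - 2 \<le> 2\<epsilon>.  On [1,2] every coefficient
   of \<xi>, \<xi>', \<xi>'' in h - 2 and in h' is O(y - 2), so for y close to 2 we get h \<ge> 1 and h' \<le> \<epsilon>,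
   which again gives the condition.  Freezing x at R only replaces h by a positive constant
   beyond R. *)

lemma antimono_on_sqrt_mult_powr:
  fixes h h' :: "real \<Rightarrow> real" and S :: "real set"
  assumes "connected S" and "S \<subseteq> {0<..}"
    and deriv: "\<And>x. x \<in> S \<Longrightarrow> (h has_real_derivative h' x) (at x)"
    and slope: "\<And>x. x \<in> S \<Longrightarrow> x * h' x \<le> 2 * \<epsilon> * h x"
  shows "antimono_on S (\<lambda>x. sqrt (h x) * x powr - \<epsilon>)"
proof (rule monotone_onI)
  fix x1 x2 assume x: "x1 \<in> S" "x2 \<in> S" "x1 \<le> x2"
  have Icc: "{x1..x2} \<subseteq> S" using connected_contains_Icc[OF assms(1) x(1,2)] .
  have "h x2 * x2 powr (-2*\<epsilon>) \<le> h x1 * x1 powr (-2*\<epsilon>)"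
  proof (rule DERIV_nonpos_imp_nonincreasing[OF x(3)])
    fix x assume "x1 \<le> x" "x \<le> x2"
    with Icc assms(2) have xS: "x \<in> S" and pos: "0 < x" by auto
    have "((\<lambda>x. h x * x powr (-2*\<epsilon>)) has_real_derivative
        h' x * x powr (-2*\<epsilon>) + h x * (-2*\<epsilon> * x powr (-2*\<epsilon> - 1))) (at x)"
      using pos deriv[OF xS] by (auto intro!: derivative_eq_intros)
    moreover have "h' x * x powr (-2*\<epsilon>) + h x * (-2*\<epsilon> * x powr (-2*\<epsilon> - 1))
        = x powr (-2*\<epsilon> - 1) * (x * h' x - 2 * \<epsilon> * h x)"
    proof -
      have "x powr (-2*\<epsilon>) = x * x powr (-2*\<epsilon> - 1)"
        using pos by (simp add: powr_mult_base)
      then show ?thesis by (simp add: algebra_simps)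
    qed
    moreover have "x powr (-2*\<epsilon> - 1) * (x * h' x - 2 * \<epsilon> * h x) \<le> 0"
      using slope[OF xS] by (simp add: mult_nonneg_nonpos)
    ultimately show "\<exists>y. ((\<lambda>x. h x * x powr (-2*\<epsilon>)) has_real_derivative y) (at x) \<and> y \<le> 0"
      by auto
  qed
  then have "sqrt (h x2 * x2 powr (-2*\<epsilon>)) \<le> sqrt (h x1 * x1 powr (-2*\<epsilon>))"
    by (rule real_sqrt_le_mono)
  \<comment> \<open>no sign condition on \<open>h\<close> is needed: \<open>sqrt\<close> is odd on the reals and multiplicative\<close>
  moreover have sqrt_eq: "sqrt (h x * x powr (-2*\<epsilon>)) = sqrt (h x) * x powr - \<epsilon>" for x
  proof -
    have "x powr (-2*\<epsilon>) = (x powr - \<epsilon>)\<^sup>2"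
      by (simp add: power2_eq_square powr_add[symmetric])
    then show ?thesis by (simp add: real_sqrt_mult)
  qed
  ultimately show "sqrt (h x2) * x2 powr - \<epsilon> \<le> sqrt (h x1) * x1 powr - \<epsilon>"
    by (simp only: sqrt_eq)
qed

lemma antimono_on_Un_adjacent:
  fixes f :: "'a::linorder \<Rightarrow> 'b::order"
  assumes "antimono_on S f" "antimono_on T f" "b \<in> S" "b \<in> T"
    and "\<And>x. x \<in> S \<Longrightarrow> x \<le> b" "\<And>x. x \<in> T \<Longrightarrow> b \<le> x"
  shows "antimono_on (S \<union> T) f"
proof (rule monotone_onI)
  have left: "x \<in> S" if "x \<in> S \<union> T" "x \<le> b" for x
    using that assms(3,6) by (metis Un_iff order.antisym)
  have right: "x \<in> T" if "x \<in> S \<union> T" "b \<le> x" for x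
    using that assms(4,5) by (metis Un_iff order.antisym)
  fix x1 x2 assume x: "x1 \<in> S \<union> T" "x2 \<in> S \<union> T" "x1 \<le> x2"
  consider "x2 \<le> b" | "b \<le> x1" | "x1 \<le> b" "b \<le> x2" by (meson le_cases)
  then show "f x2 \<le> f x1"
  proof cases
    case 1 then show ?thesis using x left[of x1] left[of x2] monotone_onD[OF assms(1)] by simp
  next
    case 2 then show ?thesis using x right[of x1] right[of x2] monotone_onD[OF assms(2)] by simp
  next
    case 3
    have "f x2 \<le> f b"
      using monotone_onD[OF assms(2) assms(4) right[OF x(2) 3(2)] 3(2)] by simp
    also have "f b \<le> f x1"
      using monotone_onD[OF assms(1) left[OF x(1) 3(1)] assms(3) 3(1)] by simp
    finally show ?thesis .
  qed
qed

lemma antimono_on_mult_powr_min: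
  fixes F :: "real \<Rightarrow> real"
  assumes mono: "antimono_on {0<..} (\<lambda>x. F x * x powr - \<epsilon>)"
    and "0 < R" "0 \<le> F R" "0 \<le> \<epsilon>"
  shows "antimono_on {0<..} (\<lambda>x. F (min x R) * x powr - \<epsilon>)"
proof (rule monotone_onI)
  fix x1 x2 :: real assume x: "x1 \<in> {0<..}" "x2 \<in> {0<..}" "x1 \<le> x2"
  have tail: "F R * b powr - \<epsilon> \<le> F R * a powr - \<epsilon>" if "0 < a" "a \<le> b" for a b
    using that assms(3,4) by (intro mult_left_mono powr_mono2') auto
  consider "x2 \<le> R" | "R \<le> x1" | "x1 < R" "R < x2" by linarith
  then show "F (min x2 R) * x2 powr - \<epsilon> \<le> F (min x1 R) * x1 powr - \<epsilon>"
  proof cases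
    case 1 then show ?thesis using monotone_onD[OF mono x] x(3) by simp
  next
    case 2 then show ?thesis using tail[of x1 x2] x by simp
  next
    case 3
    then have "F R * x2 powr - \<epsilon> \<le> F R * R powr - \<epsilon>" using tail[of R x2] assms(2) by simp
    also have "\<dots> \<le> F x1 * x1 powr - \<epsilon>" using monotone_onD[OF mono, of x1 R] x 3 by simp
    finally show ?thesis using 3 by simp
  qed
qed

lemma antimono_on_cong:
  assumes "antimono_on S f" and "\<And>x. x \<in> S \<Longrightarrow> f x = g x"
  shows "antimono_on S g"
  using assms by (simp add: monotone_on_def)

text \<open>All the upper bounds tend to \<open>0\<close> as \<open>d \<rightarrow> 0\<close>.\<close>
lemma powr_coefficient_bounds:
  fixes x y d :: real
  assumes x: "1 \<le> x" "x \<le> 2" and y: "2 \<le> y" "y \<le> 2 + d" and "d \<le> 1"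
  shows "0 \<le> y*(y-1)*x powr (y-2) - 2" "y*(y-1)*x powr (y-2) - 2 \<le> (2+d)*(1+d)*2 powr d - 2"
    and "0 \<le> y*x powr (y-1) - 2*x" "y*x powr (y-1) - 2*x \<le> 2*((2+d)*2 powr d - 2)"
    and "0 \<le> y*(y-1)*(y-2)*x powr (y-3)" "y*(y-1)*(y-2)*x powr (y-3) \<le> (2+d)*(1+d)*d"
proof -
  have "1 \<le> x powr (y-2)" using x y by (intro ge_one_powr_ge_zero) auto
  moreover have "x powr (y-2) \<le> 2 powr d"
  proof -
    have "x powr (y-2) \<le> 2 powr (y-2)" using x y by (intro powr_mono2) auto
    also have "\<dots> \<le> 2 powr d" using y by (intro powr_mono) auto
    finally show ?thesis .
  qed
  moreover have "2 \<le> y*(y-1)" "y*(y-1) \<le> (2+d)*(1+d)"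
    using mult_mono[of 2 y 1 "y-1"] mult_mono[of y "2+d" "y-1" "1+d"] y by auto
  ultimately show "0 \<le> y*(y-1)*x powr (y-2) - 2" "y*(y-1)*x powr (y-2) - 2 \<le> (2+d)*(1+d)*2 powr d - 2"
    using mult_mono[of 2 "y*(y-1)" 1 "x powr (y-2)"]
      mult_mono[of "y*(y-1)" "(2+d)*(1+d)" "x powr (y-2)" "2 powr d"] by auto
  have split: "y*x powr (y-1) - 2*x = x * (y * x powr (y-2) - 2)"
  proof -
    have "x * x powr (y-2) = x powr (y-1)" using powr_mult_base[of x "y-2"] x by simp
    then show ?thesis by (simp add: algebra_simps)
  qed
  have "2 \<le> y * x powr (y-2)" "y * x powr (y-2) \<le> (2+d) * 2 powr d"
    using mult_mono[of 2 y 1 "x powr (y-2)"] mult_mono[of y "2+d" "x powr (y-2)" "2 powr d"]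
      \<open>1 \<le> x powr (y-2)\<close> \<open>x powr (y-2) \<le> 2 powr d\<close> y by auto
  then show "0 \<le> y*x powr (y-1) - 2*x" "y*x powr (y-1) - 2*x \<le> 2*((2+d)*2 powr d - 2)"
    unfolding split using x mult_mono[of x 2 "y * x powr (y-2) - 2" "(2+d)*2 powr d - 2"] by auto
  have "x powr (y-3) \<le> 1" using x y \<open>d \<le> 1\<close> powr_mono[of "y-3" 0 x] by simp
  moreover have "y*(y-1)*(y-2) \<le> (2+d)*(1+d)*d"
    using \<open>y*(y-1) \<le> (2+d)*(1+d)\<close> \<open>2 \<le> y*(y-1)\<close> y by (intro mult_mono) auto
  ultimately show "0 \<le> y*(y-1)*(y-2)*x powr (y-3)" "y*(y-1)*(y-2)*x powr (y-3) \<le> (2+d)*(1+d)*d"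
    using \<open>2 \<le> y*(y-1)\<close> y mult_mono[of "y*(y-1)*(y-2)" "(2+d)*(1+d)*d" "x powr (y-3)" 1] by auto
qed

lemma abs_mult_le_bound:
  fixes u v U M :: real
  assumes "0 \<le> u" "u \<le> U" "\<bar>v\<bar> \<le> M"
  shows "\<bar>u * v\<bar> \<le> U * M"
  unfolding abs_mult using assms by (intro mult_mono) auto

locale cutoff =
  fixes \<xi> \<xi>' \<xi>'' :: "real \<Rightarrow> real"
  assumes mono: "mono_on {0..} \<xi>"
    and vanishes: "\<And>x. 0 \<le> x \<Longrightarrow> x \<le> 1 \<Longrightarrow> \<xi> x = 0"
    and saturates: "\<And>x. 2 \<le> x \<Longrightarrow> \<xi> x = 1"
    and has_derivative_1: "\<And>x. 0 < x \<Longrightarrow> (\<xi> has_real_derivative \<xi>' x) (at x)"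
    and has_derivative_2: "\<And>x. 0 < x \<Longrightarrow> (\<xi>' has_real_derivative \<xi>'' x) (at x)"
    and continuous_2: "continuous_on {1..2} \<xi>''"
begin

lemma nonneg: "0 \<le> x \<Longrightarrow> 0 \<le> \<xi> x"
  using mono_onD[OF mono, of 0 x] vanishes[of 0] by simp

lemma le_one: "0 \<le> x \<Longrightarrow> \<xi> x \<le> 1"
  using mono_onD[OF mono, of x 2] saturates[of x] saturates[of 2] by (cases "x \<le> 2") auto

lemma deriv_eq_0_left: "0 < x \<Longrightarrow> x \<le> 1 \<Longrightarrow> \<xi>' x = 0"
  using DERIV_local_min[OF has_derivative_1, of x "min x (1/2)"] vanishes[of x] nonneg
  by (auto simp: abs_if)

lemma deriv_eq_0_right: "2 \<le> x \<Longrightarrow> \<xi>' x = 0"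
  using DERIV_local_max[OF has_derivative_1, of x 1] saturates[of x] le_one
  by (auto simp: abs_if)

lemma bounded_derivatives:
  obtains M1 M2 where "\<And>x. x \<in> {1..2} \<Longrightarrow> \<bar>\<xi>' x\<bar> \<le> M1" "\<And>x. x \<in> {1..2} \<Longrightarrow> \<bar>\<xi>'' x\<bar> \<le> M2"
proof -
  have "continuous_on {1..2} \<xi>'"
    by (intro continuous_at_imp_continuous_on ballI DERIV_isCont[OF has_derivative_2]) auto
  with continuous_2 show ?thesis
    using that compact_Icc continuous_on_compact_bound by (metis real_norm_def)
qed

definition zeta_x :: "real \<Rightarrow> real \<Rightarrow> real" where
  "zeta_x y x = 2 + (y*(y-1)*x powr (y-2) - 2) * \<xi> x + (y*x powr (y-1) - 2*x) * \<xi>' x"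

definition zeta_xx :: "real \<Rightarrow> real \<Rightarrow> real" where
  "zeta_xx y x = y*(y-1)*(y-2)*x powr (y-3) * \<xi> x + 2*(y*(y-1)*x powr (y-2) - 2) * \<xi>' x
     + (y*x powr (y-1) - 2*x) * \<xi>'' x"

lemma dzeta_eq_zeta_x: "0 < x \<Longrightarrow> dzeta \<xi> x y = zeta_x y x"
  unfolding dzeta_def zeta_def zeta_x_def
  by (rule DERIV_imp_deriv) (auto intro!: derivative_eq_intros has_derivative_1)

lemma zeta_x_has_derivative: "0 < x \<Longrightarrow> (zeta_x y has_real_derivative zeta_xx y x) (at x)"
  unfolding zeta_x_def zeta_xx_def
  by (auto intro!: derivative_eq_intros has_derivative_1 has_derivative_2 simp: algebra_simps)

lemma zeta_x_left: "0 < x \<Longrightarrow> x \<le> 1 \<Longrightarrow> zeta_x y x = 2"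
  by (simp add: zeta_x_def vanishes deriv_eq_0_left)

lemma zeta_x_right: "2 \<le> x \<Longrightarrow> zeta_x y x = y*(y-1)*x powr (y-2)"
  by (simp add: zeta_x_def saturates deriv_eq_0_right)

lemma zeta_x_zeta_xx_bounds:
  assumes M1: "\<And>x. x \<in> {1..2} \<Longrightarrow> \<bar>\<xi>' x\<bar> \<le> M1"
    and M2: "\<And>x. x \<in> {1..2} \<Longrightarrow> \<bar>\<xi>'' x\<bar> \<le> M2"
    and x: "x \<in> {1..2}" and y: "y \<in> {2..2+d}" and "d \<le> 1"
  shows "2 - 2*((2+d)*2 powr d - 2) * M1 \<le> zeta_x y x"
    and "zeta_xx y x \<le> (2+d)*(1+d)*d + 2*((2+d)*(1+d)*2 powr d - 2)*M1 + 2*((2+d)*2 powr d - 2)*M2"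
proof -
  note bounds = powr_coefficient_bounds[of x y d]
  have \<xi>: "0 \<le> \<xi> x" "\<xi> x \<le> 1" using x nonneg le_one by auto
  have "\<bar>(y*x powr (y-1) - 2*x) * \<xi>' x\<bar> \<le> 2*((2+d)*2 powr d - 2) * M1"
    by (rule abs_mult_le_bound) (use bounds(3,4) M1 x y assms(5) in auto)
  then have "- ((y*x powr (y-1) - 2*x) * \<xi>' x) \<le> 2*((2+d)*2 powr d - 2) * M1"
    by (rule abs_le_D2)
  moreover have "0 \<le> (y*(y-1)*x powr (y-2) - 2) * \<xi> x"
    using bounds(1) x y assms(5) \<xi> by auto
  ultimately show "2 - 2*((2+d)*2 powr d - 2) * M1 \<le> zeta_x y x"
    unfolding zeta_x_def by linarith
  have "(y*(y-1)*x powr (y-2) - 2) * \<xi>' x \<le> ((2+d)*(1+d)*2 powr d - 2) * M1"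
    by (rule abs_le_D1[OF abs_mult_le_bound]) (use bounds(1,2) M1 x y assms(5) in auto)
  moreover have "(y*x powr (y-1) - 2*x) * \<xi>'' x \<le> 2*((2+d)*2 powr d - 2) * M2"
    by (rule abs_le_D1[OF abs_mult_le_bound]) (use bounds(3,4) M2 x y assms(5) in auto)
  moreover have "y*(y-1)*(y-2)*x powr (y-3) * \<xi> x \<le> (2+d)*(1+d)*d * 1"
    by (rule abs_le_D1[OF abs_mult_le_bound]) (use bounds(5,6) \<xi> x y assms(5) in auto)
  ultimately show "zeta_xx y x
      \<le> (2+d)*(1+d)*d + 2*((2+d)*(1+d)*2 powr d - 2)*M1 + 2*((2+d)*2 powr d - 2)*M2"
    unfolding zeta_xx_def by (simp add: algebra_simps)
qed

lemma eventually_zeta_x_bounds: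
  assumes "0 < \<epsilon>"
  shows "\<forall>\<^sub>F d in at_right 0. d < 2 * \<epsilon> \<and>
           (\<forall>y\<in>{2..2+d}. \<forall>x\<in>{1..2}. 1 \<le> zeta_x y x \<and> zeta_xx y x \<le> \<epsilon>)"
proof -
  obtain M1 M2 where M1: "\<And>x. x \<in> {1..2} \<Longrightarrow> \<bar>\<xi>' x\<bar> \<le> M1"
    and M2: "\<And>x. x \<in> {1..2} \<Longrightarrow> \<bar>\<xi>'' x\<bar> \<le> M2"
    using bounded_derivatives by blast
  have "((\<lambda>d. 2*((2+d)*2 powr d - 2) * M1) \<longlongrightarrow> 0) (at_right 0)"
    by (auto intro!: tendsto_eq_intros)
  then have small_1: "\<forall>\<^sub>F d in at_right 0. 2*((2+d)*2 powr d - 2) * M1 < 1"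
    by (rule order_tendstoD) simp
  have "((\<lambda>d. (2+d)*(1+d)*d + 2*((2+d)*(1+d)*2 powr d - 2)*M1 + 2*((2+d)*2 powr d - 2)*M2)
      \<longlongrightarrow> 0) (at_right 0)"
    by (auto intro!: tendsto_eq_intros)
  then have small_2: "\<forall>\<^sub>F d in at_right 0.
      (2+d)*(1+d)*d + 2*((2+d)*(1+d)*2 powr d - 2)*M1 + 2*((2+d)*2 powr d - 2)*M2 < \<epsilon>"
    using assms by (rule order_tendstoD)
  have small_d: "\<forall>\<^sub>F d in at_right 0. d < 1 \<and> d < 2 * \<epsilon>"
    using assms by (intro eventually_conj order_tendstoD[OF tendsto_ident_at]) auto
  show ?thesis
    using eventually_conj[OF small_d eventually_conj[OF small_1 small_2]]
  proof eventually_elim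
    case (elim d)
    then show ?case
      using zeta_x_zeta_xx_bounds[OF M1 M2, of _ _ d] by fastforce
  qed
qed

lemma sqrt_dzeta_powr_antimono_left:
  assumes "0 \<le> \<epsilon>"
  shows "antimono_on {0<..1} (\<lambda>x. sqrt (dzeta \<xi> x y) * x powr - \<epsilon>)"
proof (rule antimono_on_cong)
  show "antimono_on {0<..1} (\<lambda>x. sqrt 2 * x powr - \<epsilon>)"
    using assms by (intro antimono_on_sqrt_mult_powr[where h'="\<lambda>_. 0"]) (auto intro: DERIV_const)
  show "sqrt 2 * x powr - \<epsilon> = sqrt (dzeta \<xi> x y) * x powr - \<epsilon>" if "x \<in> {0<..1}" for x
    using that by (simp add: dzeta_eq_zeta_x zeta_x_left)
qed

lemma sqrt_dzeta_powr_antimono_middle: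
  assumes "0 < \<epsilon>" and bounds: "\<And>x. x \<in> {1..2} \<Longrightarrow> 1 \<le> zeta_x y x \<and> zeta_xx y x \<le> \<epsilon>"
  shows "antimono_on {1..2} (\<lambda>x. sqrt (dzeta \<xi> x y) * x powr - \<epsilon>)"
proof (rule antimono_on_cong)
  show "antimono_on {1..2} (\<lambda>x. sqrt (zeta_x y x) * x powr - \<epsilon>)"
  proof (rule antimono_on_sqrt_mult_powr)
    fix x :: real assume x: "x \<in> {1..2}"
    have "1 \<le> zeta_x y x" "zeta_xx y x \<le> \<epsilon>" using bounds[OF x] by auto
    have "x * zeta_xx y x \<le> 2 * \<epsilon>"
    proof (cases "0 \<le> zeta_xx y x")
      case True
      then have "x * zeta_xx y x \<le> 2 * zeta_xx y x" using x by (intro mult_right_mono) auto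
      then show ?thesis using \<open>zeta_xx y x \<le> \<epsilon>\<close> by linarith
    next
      case False
      then have "x * zeta_xx y x \<le> 0" using x by (simp add: mult_nonneg_nonpos)
      then show ?thesis using assms(1) by linarith
    qed
    also have "2 * \<epsilon> \<le> 2 * \<epsilon> * zeta_x y x"
      using \<open>1 \<le> zeta_x y x\<close> assms(1) mult_left_mono[of 1 "zeta_x y x" "2 * \<epsilon>"] by simp
    finally show "x * zeta_xx y x \<le> 2 * \<epsilon> * zeta_x y x" .
  qed (auto intro: zeta_x_has_derivative)
  show "sqrt (zeta_x y x) * x powr - \<epsilon> = sqrt (dzeta \<xi> x y) * x powr - \<epsilon>" if "x \<in> {1..2}" for x
    using that by (simp add: dzeta_eq_zeta_x)
qed

lemma sqrt_dzeta_powr_antimono_right: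
  assumes "2 \<le> y" "y - 2 \<le> 2 * \<epsilon>"
  shows "antimono_on {2..} (\<lambda>x. sqrt (dzeta \<xi> x y) * x powr - \<epsilon>)"
proof (rule antimono_on_cong)
  show "antimono_on {2..} (\<lambda>x. sqrt (y*(y-1)*x powr (y-2)) * x powr - \<epsilon>)"
  proof (rule antimono_on_sqrt_mult_powr[where h'="\<lambda>x. y*(y-1)*((y-2)*x powr (y-2-1))"])
    fix x :: real assume x: "x \<in> {2..}"
    have "x * (y*(y-1)*((y-2)*x powr (y-2-1))) = (y-2) * (y*(y-1)*(x * x powr (y-2-1)))"
      by (simp only: ac_simps)
    also have "\<dots> = (y-2) * (y*(y-1)*x powr (y-2))"
      using x powr_mult_base[of x "y-2-1"] by simp
    also have "\<dots> \<le> 2 * \<epsilon> * (y*(y-1)*x powr (y-2))"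
      using assms by (intro mult_right_mono) auto
    finally show "x * (y*(y-1)*((y-2)*x powr (y-2-1))) \<le> 2 * \<epsilon> * (y*(y-1)*x powr (y-2))" .
  next
    fix x :: real assume "x \<in> {2..}"
    then show "((\<lambda>x. y*(y-1)*x powr (y-2)) has_real_derivative y*(y-1)*((y-2)*x powr (y-2-1))) (at x)"
      by (intro DERIV_cmult has_real_derivative_powr) auto
  qed auto
  show "sqrt (y*(y-1)*x powr (y-2)) * x powr - \<epsilon> = sqrt (dzeta \<xi> x y) * x powr - \<epsilon>"
    if "x \<in> {2..}" for x
    using that by (simp add: dzeta_eq_zeta_x zeta_x_right)
qed

lemma sqrt_dzeta_powr_antimono:
  assumes "0 < \<epsilon>"
  obtains y0 where "2 < y0"
    and "\<And>y. y \<in> {2..y0} \<Longrightarrow> antimono_on {0<..} (\<lambda>x. sqrt (dzeta \<xi> x y) * x powr - \<epsilon>)"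
proof -
  obtain d where d: "0 < d" "d < 2 * \<epsilon>"
    and bounds: "\<And>y x. y \<in> {2..2+d} \<Longrightarrow> x \<in> {1..2} \<Longrightarrow> 1 \<le> zeta_x y x \<and> zeta_xx y x \<le> \<epsilon>"
    using eventually_happens'[OF trivial_limit_at_right_real
        eventually_conj[OF eventually_zeta_x_bounds[OF assms] eventually_at_right_less]]
    by blast
  have "antimono_on {0<..} (\<lambda>x. sqrt (dzeta \<xi> x y) * x powr - \<epsilon>)" if y: "y \<in> {2..2+d}" for y
  proof -
    let ?G = "\<lambda>x. sqrt (dzeta \<xi> x y) * x powr - \<epsilon>"
    have "antimono_on ({0<..1} \<union> {1..2}) ?G"
      by (rule antimono_on_Un_adjacent[OF sqrt_dzeta_powr_antimono_left
            sqrt_dzeta_powr_antimono_middle[OF assms bounds[OF y]], where b=1])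
        (use assms in auto)
    then have "antimono_on (({0<..1} \<union> {1..2}) \<union> {2..}) ?G"
      by (rule antimono_on_Un_adjacent[OF _ sqrt_dzeta_powr_antimono_right, where b=2])
        (use y d in auto)
    moreover have "({0<..1} \<union> {1..2}) \<union> {2..} = {0::real<..}" by auto
    ultimately show ?thesis by simp
  qed
  then show ?thesis using that[of "2 + d"] d by auto
qed

end

lemma admissible_xi_imp_cutoff:
  assumes "admissible_xi \<xi>"
  obtains \<xi>' \<xi>'' where "cutoff \<xi> \<xi>' \<xi>''"
proof -
  from assms obtain \<xi>' \<xi>'' where
    D1: "\<forall>x\<in>{0..}. (\<xi> has_real_derivative \<xi>' x) (at x within {0..})" and
    D2: "\<forall>x\<in>{0..}. (\<xi>' has_real_derivative \<xi>'' x) (at x within {0..})" and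
    C: "continuous_on {0..} \<xi>''" and mono: "mono_on {0..} \<xi>" and
    cubic: "\<forall>x\<in>{0..3/2}. \<xi> x = max ((x - 1)^3) 0" and one: "\<forall>x\<ge>2. \<xi> x = 1"
    unfolding admissible_xi_def C2_on_def by blast
  have interior: "at x within {0..} = at x" if "0 < x" for x :: real
    using that by (intro at_within_interior) auto
  show ?thesis
  proof (rule that, unfold_locales)
    fix x :: real assume "0 \<le> x" "x \<le> 1"
    then have "(x - 1)^3 \<le> 0" by (simp add: power_le_zero_eq)
    then show "\<xi> x = 0" using cubic \<open>0 \<le> x\<close> \<open>x \<le> 1\<close> by simp
  next
    fix x :: real assume "0 < x"
    then have "x \<in> {0..}" by simp
    then show "(\<xi> has_real_derivative \<xi>' x) (at x)" "(\<xi>' has_real_derivative \<xi>'' x) (at x)"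
      using D1 D2 unfolding interior[OF \<open>0 < x\<close>, symmetric] by blast+
  next
    show "continuous_on {1..2} \<xi>''" by (rule continuous_on_subset[OF C]) auto
  qed (use mono one in auto)
qed

theorem mainTheorem19:
  fixes \<xi> :: "real \<Rightarrow> real" and \<epsilon> :: real
  assumes "admissible_xi \<xi>" and "\<epsilon> > 0"
  shows "\<exists>y0 > 2. \<forall>y\<in>{2..y0}. \<forall>R > 2. \<forall>x1 x2.
           0 < x1 \<and> x1 \<le> x2 \<longrightarrow>
           gR \<xi> R x2 y * x2 powr (- \<epsilon>) \<le> gR \<xi> R x1 y * x1 powr (- \<epsilon>)"
proof -
  obtain \<xi>' \<xi>'' where "cutoff \<xi> \<xi>' \<xi>''"
    using admissible_xi_imp_cutoff[OF assms(1)] .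
  then interpret cutoff \<xi> \<xi>' \<xi>'' .
  obtain y0 where "2 < y0"
    and antimono: "\<And>y. y \<in> {2..y0} \<Longrightarrow> antimono_on {0<..} (\<lambda>x. sqrt (dzeta \<xi> x y) * x powr - \<epsilon>)"
    using sqrt_dzeta_powr_antimono[OF assms(2)] by blast
  have "gR \<xi> R x2 y * x2 powr - \<epsilon> \<le> gR \<xi> R x1 y * x1 powr - \<epsilon>"
    if y: "y \<in> {2..y0}" and "2 < R" "0 < x1" "x1 \<le> x2" for y R x1 x2
  proof -
    have "0 \<le> sqrt (dzeta \<xi> R y)"
      using y \<open>2 < R\<close> by (simp add: dzeta_eq_zeta_x zeta_x_right)
    then have "antimono_on {0<..} (\<lambda>x. sqrt (dzeta \<xi> (min x R) y) * x powr - \<epsilon>)"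
      using antimono_on_mult_powr_min[OF antimono[OF y]] \<open>2 < R\<close> assms(2) by simp
    then show ?thesis
      unfolding gR_def using that by (simp add: monotone_on_def)
  qed
  then show ?thesis using \<open>2 < y0\<close> by blast
qed

end
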